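(* Let $\mathcal{C}$ be a $\Bbbk$-linear Krull--Remak--Schmidt--Azumaya category all of whose endomorphism rings are artinian, and let $\mathcal{I}$ be an admissible ideal of $\mathcal{C}$. Then $\mathsf{Rad}(\mathcal{C}/\mathcal{I})=\mathsf{Rad}(\mathcal{C})/\mathcal{I}$, i.e. for all objects $X,Y$, $\mathsf{Rad}_{\mathcal{C}/\mathcal{I}}(X,Y)$ equals the image of $\mathsf{Rad}_{\mathcal{C}}(X,Y)$ in $\Hom_{\mathcal{C}}(X,Y)/\mathcal{I}(X,Y)$.
   Context: $\Bbbk$ is an algebraically closed field of characteristic $0$. The radical of a category $\mathcal{D}$: $\mathsf{Rad}_{\mathcal{D}}(X,Y)=\{f\in\Hom_{\mathcal{D}}(X,Y)\mid f\circ g\in\mathsf{J}(\End_{\mathcal{D}}(Y))\ \forall g\in\Hom_{\mathcal{D}}(Y,X)\}$, with $\mathsf{J}$ the Jacobson radical. $\mathcal{C}/\mathcal{I}$ has the objects of $\mathcal{C}$ and $\Hom_{\mathcal{C}/\mathcal{I}}(X,Y)=\Hom_{\mathcal{C}}(X,Y)/\mathcal{I}(X,Y)$. Krull--Remak--Schmidt--Azumaya: every object is isomorphic to an arbitrary direct sum of objects with local endomorphism rings, uniquely up to isomorphism. An ideal $\mathcal{I}$ is admissible if (1) every $f\in\mathcal{I}$ can be written $f=g_n\circ\cdots\circ g_1$ for finitely many morphisms $g_i$ none of which lies in $\mathcal{I}$, and (2) for each indecomposable $X$, $\End_{\mathcal{C}}(X)/\mathcal{I}(X,X)$ is finite-dimensional.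 *)

theory Defs
  imports "HOL-Algebra.Ideal"
begin

definition left_ideal :: "('a, 'b) ring_scheme \<Rightarrow> 'a set \<Rightarrow> bool" where
  "left_ideal R L \<longleftrightarrow> additive_subgroup L R \<and>
     (\<forall>x\<in>carrier R. \<forall>a\<in>L. x \<otimes>\<^bsub>R\<^esub> a \<in> L)"

definition right_ideal :: "('a, 'b) ring_scheme \<Rightarrow> 'a set \<Rightarrow> bool" where
  "right_ideal R L \<longleftrightarrow> additive_subgroup L R \<and>
     (\<forall>x\<in>carrier R. \<forall>a\<in>L. a \<otimes>\<^bsub>R\<^esub> x \<in> L)"

definition maximal_left_ideal :: "('a, 'b) ring_scheme \<Rightarrow> 'a set \<Rightarrow> bool" where
  "maximal_left_ideal R L \<longleftrightarrow> left_ideal R L \<and> L \<noteq> carrier R \<and>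
     (\<forall>L'. left_ideal R L' \<and> L \<subseteq> L' \<longrightarrow> L' = L \<or> L' = carrier R)"

definition jacobson :: "('a, 'b) ring_scheme \<Rightarrow> 'a set" where
  "jacobson R = {x \<in> carrier R. \<forall>L. maximal_left_ideal R L \<longrightarrow> x \<in> L}"

definition left_artinian :: "('a, 'b) ring_scheme \<Rightarrow> bool" where
  "left_artinian R \<longleftrightarrow>
     \<not> (\<exists>L :: nat \<Rightarrow> 'a set. \<forall>n. left_ideal R (L n) \<and> L (Suc n) \<subset> L n)"

definition right_artinian :: "('a, 'b) ring_scheme \<Rightarrow> bool" where
  "right_artinian R \<longleftrightarrow>
     \<not> (\<exists>L :: nat \<Rightarrow> 'a set. \<forall>n. right_ideal R (L n) \<and> L (Suc n) \<subset> L n)"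

definition artinian :: "('a, 'b) ring_scheme \<Rightarrow> bool" where
  "artinian R \<longleftrightarrow> left_artinian R \<and> right_artinian R"

definition local_ring :: "('a, 'b) ring_scheme \<Rightarrow> bool" where
  "local_ring R \<longleftrightarrow> \<one>\<^bsub>R\<^esub> \<noteq> \<zero>\<^bsub>R\<^esub> \<and>
     (\<forall>x\<in>carrier R. \<forall>y\<in>carrier R.
        x \<notin> Units R \<and> y \<notin> Units R \<longrightarrow> x \<oplus>\<^bsub>R\<^esub> y \<notin> Units R)"

text \<open>A category with object set Ob, hom-sets Hom X Y, composition
  Cmp X Y Z g f = g o f (for f : X -> Y, g : Y -> Z), identities, and a
  vector-space structure (Add, Zero, Smult) on each hom-set.\<close>
record ('o, 'm, 'k) lincat =
  Ob    :: "'o set"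
  Hom   :: "'o \<Rightarrow> 'o \<Rightarrow> 'm set"
  Cmp   :: "'o \<Rightarrow> 'o \<Rightarrow> 'o \<Rightarrow> 'm \<Rightarrow> 'm \<Rightarrow> 'm"
  Idm   :: "'o \<Rightarrow> 'm"
  Add   :: "'o \<Rightarrow> 'o \<Rightarrow> 'm \<Rightarrow> 'm \<Rightarrow> 'm"
  Zero  :: "'o \<Rightarrow> 'o \<Rightarrow> 'm"
  Smult :: "'o \<Rightarrow> 'o \<Rightarrow> 'k \<Rightarrow> 'm \<Rightarrow> 'm"

definition Neg :: "('o, 'm, 'k::field) lincat \<Rightarrow> 'o \<Rightarrow> 'o \<Rightarrow> 'm \<Rightarrow> 'm" where
  "Neg C X Y f = Smult C X Y (-1) f"

definition k_linear_category :: "('o, 'm, 'k::field) lincat \<Rightarrow> bool" where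
  "k_linear_category C \<longleftrightarrow>
    (\<forall>X\<in>Ob C. Idm C X \<in> Hom C X X) \<and>
    (\<forall>X\<in>Ob C. \<forall>Y\<in>Ob C. \<forall>Z\<in>Ob C. \<forall>f\<in>Hom C X Y. \<forall>g\<in>Hom C Y Z.
        Cmp C X Y Z g f \<in> Hom C X Z) \<and>
    (\<forall>W\<in>Ob C. \<forall>X\<in>Ob C. \<forall>Y\<in>Ob C. \<forall>Z\<in>Ob C.
       \<forall>f\<in>Hom C W X. \<forall>g\<in>Hom C X Y. \<forall>h\<in>Hom C Y Z.
        Cmp C W Y Z h (Cmp C W X Y g f) = Cmp C W X Z (Cmp C X Y Z h g) f) \<and>
    (\<forall>X\<in>Ob C. \<forall>Y\<in>Ob C. \<forall>f\<in>Hom C X Y.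
        Cmp C X Y Y (Idm C Y) f = f \<and> Cmp C X X Y f (Idm C X) = f) \<and>
    \<comment> \<open>each hom-set is a vector space over 'k\<close>
    (\<forall>X\<in>Ob C. \<forall>Y\<in>Ob C.
       Zero C X Y \<in> Hom C X Y \<and>
       (\<forall>f\<in>Hom C X Y. \<forall>g\<in>Hom C X Y. Add C X Y f g \<in> Hom C X Y) \<and>
       (\<forall>a. \<forall>f\<in>Hom C X Y. Smult C X Y a f \<in> Hom C X Y) \<and>
       (\<forall>f\<in>Hom C X Y. \<forall>g\<in>Hom C X Y. \<forall>h\<in>Hom C X Y.
          Add C X Y (Add C X Y f g) h = Add C X Y f (Add C X Y g h)) \<and>
       (\<forall>f\<in>Hom C X Y. \<forall>g\<in>Hom C X Y. Add C X Y f g = Add C X Y g f) \<and>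
       (\<forall>f\<in>Hom C X Y. Add C X Y (Zero C X Y) f = f) \<and>
       (\<forall>f\<in>Hom C X Y. Add C X Y f (Neg C X Y f) = Zero C X Y) \<and>
       (\<forall>a. \<forall>f\<in>Hom C X Y. \<forall>g\<in>Hom C X Y.
          Smult C X Y a (Add C X Y f g) = Add C X Y (Smult C X Y a f) (Smult C X Y a g)) \<and>
       (\<forall>a b. \<forall>f\<in>Hom C X Y.
          Smult C X Y (a + b) f = Add C X Y (Smult C X Y a f) (Smult C X Y b f)) \<and>
       (\<forall>a b. \<forall>f\<in>Hom C X Y. Smult C X Y (a * b) f = Smult C X Y a (Smult C X Y b f)) \<and>
       (\<forall>f\<in>Hom C X Y. Smult C X Y 1 f = f)) \<and>
    \<comment> \<open>composition is bilinear\<close>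
    (\<forall>X\<in>Ob C. \<forall>Y\<in>Ob C. \<forall>Z\<in>Ob C.
       (\<forall>f\<in>Hom C X Y. \<forall>f'\<in>Hom C X Y. \<forall>g\<in>Hom C Y Z.
          Cmp C X Y Z g (Add C X Y f f') = Add C X Z (Cmp C X Y Z g f) (Cmp C X Y Z g f')) \<and>
       (\<forall>f\<in>Hom C X Y. \<forall>g\<in>Hom C Y Z. \<forall>g'\<in>Hom C Y Z.
          Cmp C X Y Z (Add C Y Z g g') f = Add C X Z (Cmp C X Y Z g f) (Cmp C X Y Z g' f)) \<and>
       (\<forall>a. \<forall>f\<in>Hom C X Y. \<forall>g\<in>Hom C Y Z.
          Cmp C X Y Z g (Smult C X Y a f) = Smult C X Z a (Cmp C X Y Z g f) \<and>
          Cmp C X Y Z (Smult C Y Z a g) f = Smult C X Z a (Cmp C X Y Z g f)))"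

definition End_ring :: "('o, 'm, 'k) lincat \<Rightarrow> 'o \<Rightarrow> 'm ring" where
  "End_ring C X = \<lparr>carrier = Hom C X X, mult = Cmp C X X X, one = Idm C X,
                    zero = Zero C X X, add = Add C X X\<rparr>"

definition Rad :: "('o, 'm, 'k) lincat \<Rightarrow> 'o \<Rightarrow> 'o \<Rightarrow> 'm set" where
  "Rad C X Y = {f \<in> Hom C X Y. \<forall>g\<in>Hom C Y X. Cmp C Y X Y f g \<in> jacobson (End_ring C Y)}"

definition isomorphic :: "('o, 'm, 'k) lincat \<Rightarrow> 'o \<Rightarrow> 'o \<Rightarrow> bool" where
  "isomorphic C A B \<longleftrightarrow> A \<in> Ob C \<and> B \<in> Ob C \<and>
     (\<exists>f\<in>Hom C A B. \<exists>g\<in>Hom C B A. Cmp C A B A g f = Idm C A \<and> Cmp C B A B f g = Idm C B)"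

text \<open>S is a direct sum (coproduct) of the family D; each index is a pair
  (A, i) of a summand A and its injection i : A -> S.  Arbitrary (possibly
  infinite) families are allowed.\<close>
definition is_direct_sum :: "('o, 'm, 'k) lincat \<Rightarrow> 'o \<Rightarrow> ('o \<times> 'm) set \<Rightarrow> bool" where
  "is_direct_sum C S D \<longleftrightarrow> S \<in> Ob C \<and>
     (\<forall>(A, i)\<in>D. A \<in> Ob C \<and> i \<in> Hom C A S) \<and>
     (\<forall>Z\<in>Ob C. \<forall>h. (\<forall>(A, i)\<in>D. h (A, i) \<in> Hom C A Z) \<longrightarrow>
        (\<exists>!g. g \<in> Hom C S Z \<and> (\<forall>(A, i)\<in>D. Cmp C A S Z g i = h (A, i))))"

definition KRSA :: "('o, 'm, 'k) lincat \<Rightarrow> bool" where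
  "KRSA C \<longleftrightarrow>
    (\<forall>X\<in>Ob C. \<exists>D. is_direct_sum C X D \<and> (\<forall>(A, i)\<in>D. local_ring (End_ring C A))) \<and>
    (\<forall>X\<in>Ob C. \<forall>D D'.
       is_direct_sum C X D \<and> (\<forall>(A, i)\<in>D. local_ring (End_ring C A)) \<and>
       is_direct_sum C X D' \<and> (\<forall>(A, i)\<in>D'. local_ring (End_ring C A)) \<longrightarrow>
       (\<exists>\<sigma>. bij_betw \<sigma> D D' \<and> (\<forall>d\<in>D. isomorphic C (fst d) (fst (\<sigma> d)))))"

definition is_zero_object :: "('o, 'm, 'k) lincat \<Rightarrow> 'o \<Rightarrow> bool" where
  "is_zero_object C X \<longleftrightarrow> Idm C X = Zero C X X"

definition indecomposable :: "('o, 'm, 'k) lincat \<Rightarrow> 'o \<Rightarrow> bool" where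
  "indecomposable C X \<longleftrightarrow> X \<in> Ob C \<and> \<not> is_zero_object C X \<and>
     (\<forall>A B i j. A \<in> Ob C \<and> B \<in> Ob C \<and> i \<in> Hom C A X \<and> j \<in> Hom C B X \<and>
        (\<forall>Z\<in>Ob C. \<forall>f\<in>Hom C A Z. \<forall>g\<in>Hom C B Z.
           (\<exists>!h. h \<in> Hom C X Z \<and> Cmp C A X Z h i = f \<and> Cmp C B X Z h j = g))
        \<longrightarrow> is_zero_object C A \<or> is_zero_object C B)"

definition cat_ideal :: "('o, 'm, 'k::field) lincat \<Rightarrow> ('o \<Rightarrow> 'o \<Rightarrow> 'm set) \<Rightarrow> bool" where
  "cat_ideal C I \<longleftrightarrow>
    (\<forall>X\<in>Ob C. \<forall>Y\<in>Ob C.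
       I X Y \<subseteq> Hom C X Y \<and> Zero C X Y \<in> I X Y \<and>
       (\<forall>f\<in>I X Y. \<forall>g\<in>I X Y. Add C X Y f g \<in> I X Y) \<and>
       (\<forall>a. \<forall>f\<in>I X Y. Smult C X Y a f \<in> I X Y)) \<and>
    (\<forall>W\<in>Ob C. \<forall>X\<in>Ob C. \<forall>Y\<in>Ob C. \<forall>Z\<in>Ob C.
       \<forall>u\<in>Hom C W X. \<forall>f\<in>I X Y. \<forall>v\<in>Hom C Y Z.
         Cmp C W Y Z v (Cmp C W X Y f u) \<in> I W Z)"

fun chain_comp :: "('o, 'm, 'k) lincat \<Rightarrow> (nat \<Rightarrow> 'o) \<Rightarrow> (nat \<Rightarrow> 'm) \<Rightarrow> nat \<Rightarrow> 'm" where
  "chain_comp C Xs gs 0 = Idm C (Xs 0)"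
| "chain_comp C Xs gs (Suc n) = Cmp C (Xs 0) (Xs n) (Xs (Suc n)) (gs n) (chain_comp C Xs gs n)"

fun lin_comb :: "('o, 'm, 'k) lincat \<Rightarrow> 'o \<Rightarrow> 'o \<Rightarrow> ('k \<times> 'm) list \<Rightarrow> 'm" where
  "lin_comb C X Y [] = Zero C X Y"
| "lin_comb C X Y ((c, s) # cs) = Add C X Y (Smult C X Y c s) (lin_comb C X Y cs)"

definition fin_dim_quotient_End ::
  "('o, 'm, 'k::field) lincat \<Rightarrow> ('o \<Rightarrow> 'o \<Rightarrow> 'm set) \<Rightarrow> 'o \<Rightarrow> bool" where
  "fin_dim_quotient_End C I X \<longleftrightarrow>
     (\<exists>S. finite S \<and> S \<subseteq> Hom C X X \<and>
        (\<forall>f\<in>Hom C X X. \<exists>cs. set (map snd cs) \<subseteq> S \<and>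
            Add C X X f (Neg C X X (lin_comb C X X cs)) \<in> I X X))"

definition admissible :: "('o, 'm, 'k::field) lincat \<Rightarrow> ('o \<Rightarrow> 'o \<Rightarrow> 'm set) \<Rightarrow> bool" where
  "admissible C I \<longleftrightarrow> cat_ideal C I \<and>
    (\<forall>X\<in>Ob C. \<forall>Y\<in>Ob C. \<forall>f\<in>I X Y.
       \<exists>n\<ge>1. \<exists>Xs gs. Xs 0 = X \<and> Xs n = Y \<and>
         (\<forall>i\<le>n. Xs i \<in> Ob C) \<and>
         (\<forall>i<n. gs i \<in> Hom C (Xs i) (Xs (Suc i)) \<and> gs i \<notin> I (Xs i) (Xs (Suc i))) \<and>
         f = chain_comp C Xs gs n) \<and>
    (\<forall>X. indecomposable C X \<longrightarrow> fin_dim_quotient_End C I X)"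

definition coset :: "('o, 'm, 'k) lincat \<Rightarrow> ('o \<Rightarrow> 'o \<Rightarrow> 'm set) \<Rightarrow> 'o \<Rightarrow> 'o \<Rightarrow> 'm \<Rightarrow> 'm set" where
  "coset C I X Y f = {Add C X Y f i | i. i \<in> I X Y}"

definition quotient_cat ::
  "('o, 'm, 'k) lincat \<Rightarrow> ('o \<Rightarrow> 'o \<Rightarrow> 'm set) \<Rightarrow> ('o, 'm set, 'k) lincat" where
  "quotient_cat C I = \<lparr>
     Ob = Ob C,
     Hom = (\<lambda>X Y. coset C I X Y ` Hom C X Y),
     Cmp = (\<lambda>X Y Z G F. coset C I X Z (Cmp C X Y Z (SOME g. g \<in> G) (SOME f. f \<in> F))),
     Idm = (\<lambda>X. coset C I X X (Idm C X)),
     Add = (\<lambda>X Y F G. coset C I X Y (Add C X Y (SOME f. f \<in> F) (SOME g. g \<in> G))),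
     Zero = (\<lambda>X Y. coset C I X Y (Zero C X Y)),
     Smult = (\<lambda>X Y a F. coset C I X Y (Smult C X Y a (SOME f. f \<in> F))) \<rparr>"

definition algebraically_closed_field :: "'k::field itself \<Rightarrow> bool" where
  "algebraically_closed_field _ \<longleftrightarrow>
     (\<forall>n \<ge> 1. \<forall>a :: nat \<Rightarrow> 'k. a n \<noteq> 0 \<longrightarrow> (\<exists>x. (\<Sum>i\<le>n. a i * x ^ i) = 0))"

end

(*
  By condition (1) of admissibility no identity morphism lies in I, so no endomorphism in I(A,A)
  is invertible. If End(A) is local this makes 1 - c invertible for every c in I(A,A). Decompose
  Y into summands A with local endomorphism rings; artinianity of End(Y) forces the decomposition
  to be finite, so 1 = sum of the idempotents e = i p. Through the corner e End(Y) e = End(A),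
  every z e with z in I(Y,Y) lies in each maximal left ideal of End(Y); hence I(Y,Y) is contained
  in the Jacobson radical of End(Y). The quotient map End(Y) -> End_{C/I}(Y) is then a surjective
  ring map whose kernel lies in the radical, so it matches up maximal left ideals and therefore
  Jacobson radicals, which identifies Rad(C/I) with the image of Rad(C).
*)
theory Submission
  imports Defs "HOL-Algebra.QuotRing"
begin

section \<open>Left ideals, local rings and Jacobson radicals\<close>

lemma (in ring) left_idealI:
  assumes "L \<subseteq> carrier R" "\<zero> \<in> L" "\<And>a b. a \<in> L \<Longrightarrow> b \<in> L \<Longrightarrow> a \<oplus> b \<in> L"
    and "\<And>a. a \<in> L \<Longrightarrow> \<ominus> a \<in> L" "\<And>x a. x \<in> carrier R \<Longrightarrow> a \<in> L \<Longrightarrow> x \<otimes> a \<in> L"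
  shows "left_ideal R L"
proof -
  have "subgroup L (add_monoid R)"
    by (rule add.subgroupI) (use assms in \<open>auto simp: a_inv_def\<close>)
  then show ?thesis
    unfolding left_ideal_def using assms(5) by (blast intro: additive_subgroupI)
qed

lemma (in ring) left_idealD:
  assumes "left_ideal R L"
  shows "L \<subseteq> carrier R" "\<zero> \<in> L" "\<And>a b. a \<in> L \<Longrightarrow> b \<in> L \<Longrightarrow> a \<oplus> b \<in> L"
    and "\<And>a. a \<in> L \<Longrightarrow> \<ominus> a \<in> L" "\<And>x a. x \<in> carrier R \<Longrightarrow> a \<in> L \<Longrightarrow> x \<otimes> a \<in> L"
proof -
  have L: "additive_subgroup L R" and "\<forall>x\<in>carrier R. \<forall>a\<in>L. x \<otimes> a \<in> L"
    using assms unfolding left_ideal_def by auto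
  then show "\<And>x a. x \<in> carrier R \<Longrightarrow> a \<in> L \<Longrightarrow> x \<otimes> a \<in> L" by blast
  show "L \<subseteq> carrier R" "\<zero> \<in> L" "\<And>a b. a \<in> L \<Longrightarrow> b \<in> L \<Longrightarrow> a \<oplus> b \<in> L"
    and "\<And>a. a \<in> L \<Longrightarrow> \<ominus> a \<in> L"
    using additive_subgroup.a_subset[OF L] additive_subgroup.zero_closed[OF L]
      additive_subgroup.a_closed[OF L] additive_subgroup.a_inv_closed[OF L] by auto
qed

lemma (in ring) left_ideal_eq_carrier:
  assumes "left_ideal R L" "\<one> \<in> L"
  shows "L = carrier R"
  using left_idealD[OF assms(1)] assms(2) by (metis r_one subsetI subset_antisym)

lemma (in ring) left_ideal_finsum:
  assumes L: "left_ideal R L" and "finite A" and "\<And>a. a \<in> A \<Longrightarrow> f a \<in> L"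
  shows "finsum R f A \<in> L"
  using assms(2,3)
proof (induction A rule: finite_induct)
  case empty
  then show ?case using left_idealD(2)[OF L] by simp
next
  case (insert a A)
  then have "finsum R f (insert a A) = f a \<oplus> finsum R f A"
    using left_idealD(1)[OF L] by (intro finsum_insert) auto
  then show ?case using insert left_idealD(3)[OF L] by auto
qed

lemma (in ring) left_ideal_add_multiples:
  assumes L: "left_ideal R L" and x: "x \<in> carrier R"
  shows "left_ideal R {l \<oplus> a \<otimes> x | l a. l \<in> L \<and> a \<in> carrier R}" (is "left_ideal R ?L'")
proof -
  note L_ideal = left_idealD[OF L]
  show ?thesis
  proof (rule left_idealI)
    show "?L' \<subseteq> carrier R" using L_ideal(1) x by auto
    show "\<zero> \<in> ?L'" using L_ideal(2) x by (auto intro!: exI[of _ \<zero>])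
  next
    fix b c assume "b \<in> ?L'" "c \<in> ?L'"
    then obtain l1 a1 l2 a2 where "b = l1 \<oplus> a1 \<otimes> x" "c = l2 \<oplus> a2 \<otimes> x" "l1 \<in> L" "l2 \<in> L"
      "a1 \<in> carrier R" "a2 \<in> carrier R" by auto
    moreover have "(l1 \<oplus> a1 \<otimes> x) \<oplus> (l2 \<oplus> a2 \<otimes> x) = (l1 \<oplus> l2) \<oplus> (a1 \<oplus> a2) \<otimes> x"
      using calculation L_ideal(1) x by (simp add: l_distr a_ac subset_iff)
    ultimately show "b \<oplus> c \<in> ?L'" using L_ideal(3) by blast
  next
    fix b assume "b \<in> ?L'"
    then obtain l a where "b = l \<oplus> a \<otimes> x" "l \<in> L" "a \<in> carrier R" by auto
    moreover have "\<ominus> (l \<oplus> a \<otimes> x) = (\<ominus> l) \<oplus> (\<ominus> a) \<otimes> x"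
      using calculation L_ideal(1) x by (simp add: minus_add l_minus subset_iff)
    ultimately show "\<ominus> b \<in> ?L'" using L_ideal(4) by blast
  next
    fix r b assume r: "r \<in> carrier R" and "b \<in> ?L'"
    then obtain l a where "b = l \<oplus> a \<otimes> x" "l \<in> L" "a \<in> carrier R" by auto
    moreover have "r \<otimes> (l \<oplus> a \<otimes> x) = (r \<otimes> l) \<oplus> (r \<otimes> a) \<otimes> x"
      using calculation L_ideal(1) x r by (simp add: r_distr m_assoc subset_iff)
    ultimately show "r \<otimes> b \<in> ?L'" using L_ideal(5) r by blast
  qed
qed

lemma (in ring) maximal_left_ideal_decompose:
  assumes L: "maximal_left_ideal R L" and x: "x \<in> carrier R" "x \<notin> L" and y: "y \<in> carrier R"
  shows "\<exists>l\<in>L. \<exists>a\<in>carrier R. y = l \<oplus> a \<otimes> x"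
proof -
  define L' where "L' = {l \<oplus> a \<otimes> x | l a. l \<in> L \<and> a \<in> carrier R}"
  have L_ideal: "left_ideal R L" using L unfolding maximal_left_ideal_def by blast
  then have "left_ideal R L'" unfolding L'_def using left_ideal_add_multiples x(1) by blast
  moreover have "L \<subseteq> L'"
  proof
    fix l assume "l \<in> L"
    moreover have "l = l \<oplus> \<zero> \<otimes> x" using calculation left_idealD(1)[OF L_ideal] x by auto
    ultimately show "l \<in> L'" unfolding L'_def by blast
  qed
  moreover have "x = \<zero> \<oplus> \<one> \<otimes> x" using x by simp
  then have "x \<in> L'" unfolding L'_def using left_idealD(2)[OF L_ideal] by blast
  ultimately have "L' = carrier R" using L x unfolding maximal_left_ideal_def by blast
  then show ?thesis using y unfolding L'_def by blast
qed

lemma (in ring) mem_maximal_left_ideal_if_corner_invertible: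
  assumes L: "maximal_left_ideal R L" and e: "e \<in> carrier R" and x: "x \<in> carrier R" "x \<otimes> e = x"
    and inv: "\<And>a. a \<in> carrier R \<Longrightarrow> \<exists>t\<in>carrier R. t \<otimes> (e \<ominus> a \<otimes> x) = e"
  shows "x \<in> L"
proof (rule ccontr)
  assume x_notin: "x \<notin> L"
  have "left_ideal R L" using L unfolding maximal_left_ideal_def by blast
  note L_ideal = left_idealD[OF this]
  obtain l a where l: "l \<in> L" and a: "a \<in> carrier R" and e_eq: "e = l \<oplus> a \<otimes> x"
    using maximal_left_ideal_decompose[OF L x(1) x_notin e] by blast
  have l_carrier: "l \<in> carrier R" using l L_ideal(1) by blast
  have "e \<ominus> a \<otimes> x = l"
    using e_eq a x(1) l_carrier by (simp add: a_minus_def a_assoc r_neg)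
  moreover obtain t where "t \<in> carrier R" "t \<otimes> (e \<ominus> a \<otimes> x) = e" using inv[OF a] by blast
  ultimately have "e \<in> L" using L_ideal(5)[OF _ l] by force
  then have "x \<otimes> e \<in> L" using L_ideal(5) x(1) by blast
  then show False using x x_notin by simp
qed

lemma (in ring) local_ring_one_minus_nonunit:
  assumes "local_ring R" "c \<in> carrier R" "c \<notin> Units R"
  shows "\<one> \<ominus> c \<in> Units R"
proof (rule ccontr)
  assume "\<one> \<ominus> c \<notin> Units R"
  moreover have "(\<one> \<ominus> c) \<oplus> c = \<one>"
    using assms(2) by (simp add: a_minus_def a_assoc l_neg)
  ultimately show False
    using assms Units_one_closed unfolding local_ring_def by force
qed

locale surj_ring_hom = ring_hom_ring +
  assumes surj: "h ` carrier R = carrier S"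
begin

lemma left_ideal_vimage:
  assumes "left_ideal S L"
  shows "left_ideal R {x \<in> carrier R. h x \<in> L}"
  using S.left_idealD[OF assms] by (intro R.left_idealI) auto

lemma left_ideal_image:
  assumes "left_ideal R L"
  shows "left_ideal S (h ` L)"
proof -
  note L_ideal = R.left_idealD[OF assms]
  show ?thesis
  proof (rule S.left_idealI)
    show "h ` L \<subseteq> carrier S" using L_ideal(1) by auto
    show "\<zero>\<^bsub>S\<^esub> \<in> h ` L" using L_ideal(2) hom_zero by force
  next
    fix a b assume "a \<in> h ` L" "b \<in> h ` L"
    then obtain x y where "x \<in> L" "y \<in> L" "a = h x" "b = h y" by auto
    moreover from this have "a \<oplus>\<^bsub>S\<^esub> b = h (x \<oplus> y)" using L_ideal(1) by (simp add: subsetD)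
    ultimately show "a \<oplus>\<^bsub>S\<^esub> b \<in> h ` L" using L_ideal(3) by blast
  next
    fix a assume "a \<in> h ` L"
    then obtain x where "x \<in> L" "a = h x" by auto
    moreover from this have "\<ominus>\<^bsub>S\<^esub> a = h (\<ominus> x)" using L_ideal(1) by (simp add: subsetD)
    ultimately show "\<ominus>\<^bsub>S\<^esub> a \<in> h ` L" using L_ideal(4) by blast
  next
    fix s a assume "s \<in> carrier S" "a \<in> h ` L"
    then obtain r x where "r \<in> carrier R" "s = h r" "x \<in> L" "a = h x" using surj by blast
    moreover from this have "s \<otimes>\<^bsub>S\<^esub> a = h (r \<otimes> x)" using L_ideal(1) by (simp add: subsetD)
    ultimately show "s \<otimes>\<^bsub>S\<^esub> a \<in> h ` L" using L_ideal(5) by blast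
  qed
qed

lemma left_ideal_image_vimage:
  assumes "left_ideal S L"
  shows "h ` {x \<in> carrier R. h x \<in> L} = L"
proof (intro equalityI subsetI)
  fix y assume "y \<in> L"
  moreover from this obtain x where "x \<in> carrier R" "y = h x"
    using S.left_idealD(1)[OF assms] surj by (metis imageE subsetD)
  ultimately show "y \<in> h ` {x \<in> carrier R. h x \<in> L}" by blast
qed blast

lemma left_ideal_image_mem_iff:
  assumes M: "left_ideal R M" and kernel: "a_kernel R S h \<subseteq> M" and x: "x \<in> carrier R"
  shows "h x \<in> h ` M \<longleftrightarrow> x \<in> M"
proof
  assume "h x \<in> h ` M"
  then obtain m where m: "m \<in> M" "h x = h m" by blast
  note M_mem = R.left_idealD[OF M]
  have m_carrier: "m \<in> carrier R" using m M_mem(1) by blast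
  have "h (x \<ominus> m) = \<zero>\<^bsub>S\<^esub>"
    using x m m_carrier by (simp add: a_minus_def S.r_neg)
  then have "x \<ominus> m \<in> a_kernel R S h"
    unfolding a_kernel_def' using R.minus_closed[OF x m_carrier] by blast
  then have "(x \<ominus> m) \<oplus> m \<in> M" using kernel M_mem(3) m by blast
  then show "x \<in> M" using x m_carrier by (simp add: a_minus_def R.a_assoc R.l_neg)
qed (rule imageI)

lemma maximal_left_ideal_vimage:
  assumes M: "maximal_left_ideal S M"
  shows "maximal_left_ideal R {x \<in> carrier R. h x \<in> M}" (is "maximal_left_ideal R ?P")
  unfolding maximal_left_ideal_def
proof (intro conjI allI impI)
  have M_ideal: "left_ideal S M" and M_proper: "M \<noteq> carrier S"
    using M unfolding maximal_left_ideal_def by auto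
  show "left_ideal R ?P" by (rule left_ideal_vimage[OF M_ideal])
  show "?P \<noteq> carrier R"
  proof
    assume "?P = carrier R"
    then have "\<one> \<in> ?P" by simp
    then have "\<one>\<^bsub>S\<^esub> \<in> M" by simp
    then show False using M_proper S.left_ideal_eq_carrier[OF M_ideal] by blast
  qed
  fix L assume L: "left_ideal R L \<and> ?P \<subseteq> L"
  have "M \<subseteq> h ` L"
    using left_ideal_image_vimage[OF M_ideal] L by blast
  then have "h ` L = M \<or> h ` L = carrier S"
    using M left_ideal_image L unfolding maximal_left_ideal_def by blast
  then show "L = ?P \<or> L = carrier R"
  proof
    assume "h ` L = M"
    then show ?thesis using L R.left_idealD(1)[of L] by auto
  next
    assume "h ` L = carrier S"
    then have "h \<one> \<in> h ` L" by simp
    moreover have "a_kernel R S h \<subseteq> L"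
      unfolding a_kernel_def' using L S.left_idealD(2)[OF M_ideal] by auto
    ultimately have "\<one> \<in> L" using left_ideal_image_mem_iff L by blast
    then show ?thesis using L R.left_ideal_eq_carrier by blast
  qed
qed

lemma maximal_left_ideal_image:
  assumes M: "maximal_left_ideal R M" and kernel: "a_kernel R S h \<subseteq> M"
  shows "maximal_left_ideal S (h ` M)"
  unfolding maximal_left_ideal_def
proof (intro conjI allI impI)
  have M_ideal: "left_ideal R M" and M_proper: "M \<noteq> carrier R"
    using M unfolding maximal_left_ideal_def by auto
  have M_carrier: "M \<subseteq> carrier R" by (rule R.left_idealD(1)[OF M_ideal])
  show "left_ideal S (h ` M)" by (rule left_ideal_image[OF M_ideal])
  show "h ` M \<noteq> carrier S"
  proof
    assume "h ` M = carrier S"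
    then have "h \<one> \<in> h ` M" by simp
    then have "\<one> \<in> M" using left_ideal_image_mem_iff[OF M_ideal kernel] by blast
    then show False using M_proper R.left_ideal_eq_carrier[OF M_ideal] by blast
  qed
  fix L assume L: "left_ideal S L \<and> h ` M \<subseteq> L"
  then have "M \<subseteq> {x \<in> carrier R. h x \<in> L}" using M_carrier by auto
  then have "{x \<in> carrier R. h x \<in> L} = M \<or> {x \<in> carrier R. h x \<in> L} = carrier R"
    using M left_ideal_vimage L unfolding maximal_left_ideal_def by blast
  moreover have "L = h ` {x \<in> carrier R. h x \<in> L}"
    using left_ideal_image_vimage L by simp
  ultimately show "L = h ` M \<or> L = carrier S"
    using surj by auto
qed

lemma jacobson_image:
  assumes "x \<in> jacobson R"
  shows "h x \<in> jacobson S"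
  using assms maximal_left_ideal_vimage unfolding jacobson_def by auto

lemma mem_jacobson_iff_image:
  assumes kernel: "a_kernel R S h \<subseteq> jacobson R" and x: "x \<in> carrier R"
  shows "h x \<in> jacobson S \<longleftrightarrow> x \<in> jacobson R"
proof
  assume hx: "h x \<in> jacobson S"
  have "x \<in> M" if M: "maximal_left_ideal R M" for M
  proof -
    have M_ideal: "left_ideal R M" using M unfolding maximal_left_ideal_def by blast
    have kernel_M: "a_kernel R S h \<subseteq> M" using kernel M unfolding jacobson_def by blast
    have "h x \<in> h ` M" using hx maximal_left_ideal_image[OF M kernel_M] unfolding jacobson_def by blast
    then show "x \<in> M" using left_ideal_image_mem_iff[OF M_ideal kernel_M x] by blast
  qed
  then show "x \<in> jacobson R" using x unfolding jacobson_def by blast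
qed (rule jacobson_image)

end

section \<open>Linear categories, their ideals and quotients\<close>

locale linear_category =
  fixes C :: "('o, 'm, 'k::field) lincat"
  assumes k_linear: "k_linear_category C"
begin

lemma Idm_hom [simp, intro]: "X \<in> Ob C \<Longrightarrow> Idm C X \<in> Hom C X X"
  using k_linear unfolding k_linear_category_def by meson

lemma Cmp_hom [intro]:
  "\<lbrakk>X \<in> Ob C; Y \<in> Ob C; Z \<in> Ob C; f \<in> Hom C X Y; g \<in> Hom C Y Z\<rbrakk>
   \<Longrightarrow> Cmp C X Y Z g f \<in> Hom C X Z"
  using k_linear unfolding k_linear_category_def by meson

lemma Cmp_assoc:
  "\<lbrakk>W \<in> Ob C; X \<in> Ob C; Y \<in> Ob C; Z \<in> Ob C; f \<in> Hom C W X; g \<in> Hom C X Y; h \<in> Hom C Y Z\<rbrakk>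
   \<Longrightarrow> Cmp C W Y Z h (Cmp C W X Y g f) = Cmp C W X Z (Cmp C X Y Z h g) f"
  using k_linear unfolding k_linear_category_def by meson

lemma Cmp_Idm_left [simp]:
  "\<lbrakk>X \<in> Ob C; Y \<in> Ob C; f \<in> Hom C X Y\<rbrakk> \<Longrightarrow> Cmp C X Y Y (Idm C Y) f = f"
  using k_linear unfolding k_linear_category_def by meson

lemma Cmp_Idm_right [simp]:
  "\<lbrakk>X \<in> Ob C; Y \<in> Ob C; f \<in> Hom C X Y\<rbrakk> \<Longrightarrow> Cmp C X X Y f (Idm C X) = f"
  using k_linear unfolding k_linear_category_def by meson

context
  fixes X Y assumes X: "X \<in> Ob C" and Y: "Y \<in> Ob C"
begin

lemma Zero_hom [simp, intro]: "Zero C X Y \<in> Hom C X Y"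
  using k_linear X Y unfolding k_linear_category_def by meson

lemma Add_hom [intro]: "\<lbrakk>f \<in> Hom C X Y; g \<in> Hom C X Y\<rbrakk> \<Longrightarrow> Add C X Y f g \<in> Hom C X Y"
  using k_linear X Y unfolding k_linear_category_def by meson

lemma Neg_hom [intro]: "f \<in> Hom C X Y \<Longrightarrow> Neg C X Y f \<in> Hom C X Y"
  using k_linear X Y unfolding k_linear_category_def Neg_def by meson

lemma Add_assoc:
  "\<lbrakk>f \<in> Hom C X Y; g \<in> Hom C X Y; h \<in> Hom C X Y\<rbrakk>
   \<Longrightarrow> Add C X Y (Add C X Y f g) h = Add C X Y f (Add C X Y g h)"
  using k_linear X Y unfolding k_linear_category_def by meson

lemma Add_commute: "\<lbrakk>f \<in> Hom C X Y; g \<in> Hom C X Y\<rbrakk> \<Longrightarrow> Add C X Y f g = Add C X Y g f"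
  using k_linear X Y unfolding k_linear_category_def by meson

lemma Add_Zero_left [simp]: "f \<in> Hom C X Y \<Longrightarrow> Add C X Y (Zero C X Y) f = f"
  using k_linear X Y unfolding k_linear_category_def by meson

lemma Add_Zero_right [simp]: "f \<in> Hom C X Y \<Longrightarrow> Add C X Y f (Zero C X Y) = f"
  using Add_commute Add_Zero_left Zero_hom by metis

lemma Add_Neg_right [simp]: "f \<in> Hom C X Y \<Longrightarrow> Add C X Y f (Neg C X Y f) = Zero C X Y"
  using k_linear X Y unfolding k_linear_category_def by meson

lemma Add_Neg_left [simp]: "f \<in> Hom C X Y \<Longrightarrow> Add C X Y (Neg C X Y f) f = Zero C X Y"
  using Add_commute Add_Neg_right Neg_hom by metis

lemma Neg_Zero [simp]: "Neg C X Y (Zero C X Y) = Zero C X Y"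
  using Add_Neg_left[OF Zero_hom] Add_Zero_right Neg_hom[OF Zero_hom] by metis

lemma Add_left_cancel:
  "\<lbrakk>f \<in> Hom C X Y; g \<in> Hom C X Y; h \<in> Hom C X Y; Add C X Y h f = Add C X Y h g\<rbrakk> \<Longrightarrow> f = g"
  by (metis Add_assoc Add_Zero_left Add_Neg_left Neg_hom)

end

context
  fixes X Y Z assumes X: "X \<in> Ob C" and Y: "Y \<in> Ob C" and Z: "Z \<in> Ob C"
begin

lemma Cmp_Add_right:
  "\<lbrakk>f \<in> Hom C X Y; f' \<in> Hom C X Y; g \<in> Hom C Y Z\<rbrakk>
   \<Longrightarrow> Cmp C X Y Z g (Add C X Y f f') = Add C X Z (Cmp C X Y Z g f) (Cmp C X Y Z g f')"
  using k_linear X Y Z unfolding k_linear_category_def by meson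

lemma Cmp_Add_left:
  "\<lbrakk>f \<in> Hom C X Y; g \<in> Hom C Y Z; g' \<in> Hom C Y Z\<rbrakk>
   \<Longrightarrow> Cmp C X Y Z (Add C Y Z g g') f = Add C X Z (Cmp C X Y Z g f) (Cmp C X Y Z g' f)"
  using k_linear X Y Z unfolding k_linear_category_def by meson

lemma Cmp_Neg_right:
  "\<lbrakk>f \<in> Hom C X Y; g \<in> Hom C Y Z\<rbrakk>
   \<Longrightarrow> Cmp C X Y Z g (Neg C X Y f) = Neg C X Z (Cmp C X Y Z g f)"
  using k_linear X Y Z unfolding k_linear_category_def Neg_def by meson

lemma Cmp_Neg_left:
  "\<lbrakk>f \<in> Hom C X Y; g \<in> Hom C Y Z\<rbrakk>
   \<Longrightarrow> Cmp C X Y Z (Neg C Y Z g) f = Neg C X Z (Cmp C X Y Z g f)"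
  using k_linear X Y Z unfolding k_linear_category_def Neg_def by meson

lemma Cmp_Zero_right [simp]: "g \<in> Hom C Y Z \<Longrightarrow> Cmp C X Y Z g (Zero C X Y) = Zero C X Z"
  by (metis Add_Zero_left Add_left_cancel Add_Zero_right Cmp_Add_right Cmp_hom X Y Z Zero_hom)

lemma Cmp_Zero_left [simp]: "f \<in> Hom C X Y \<Longrightarrow> Cmp C X Y Z (Zero C Y Z) f = Zero C X Z"
  by (metis Add_Zero_left Add_left_cancel Add_Zero_right Cmp_Add_left Cmp_hom X Y Z Zero_hom)

end

lemma End_ring_simps [simp]:
  "carrier (End_ring C X) = Hom C X X" "mult (End_ring C X) = Cmp C X X X"
  "one (End_ring C X) = Idm C X" "zero (End_ring C X) = Zero C X X" "add (End_ring C X) = Add C X X"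
  by (simp_all add: End_ring_def)

lemma End_ring_is_ring:
  assumes X: "X \<in> Ob C"
  shows "ring (End_ring C X)"
proof (rule ringI)
  show "abelian_group (End_ring C X)"
    by (rule abelian_groupI)
      (auto simp: X Add_hom Add_assoc intro: Add_commute[OF X X] intro!: bexI[of _ "Neg C X X _"])
  show "monoid (End_ring C X)"
    by (rule monoidI) (auto simp: X Cmp_assoc)
qed (auto simp: X Cmp_Add_left Cmp_Add_right)

lemma End_ring_a_inv:
  assumes X: "X \<in> Ob C" and f: "f \<in> Hom C X X"
  shows "\<ominus>\<^bsub>End_ring C X\<^esub> f = Neg C X X f"
proof -
  interpret ring "End_ring C X" by (rule End_ring_is_ring[OF X])
  show ?thesis by (rule minus_equality) (use X f in auto)
qed

end

locale linear_category_ideal = linear_category C for C :: "('o, 'm, 'k::field) lincat" +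
  fixes I :: "'o \<Rightarrow> 'o \<Rightarrow> 'm set"
  assumes ideal: "cat_ideal C I"
begin

context
  fixes X Y assumes X: "X \<in> Ob C" and Y: "Y \<in> Ob C"
begin

lemma ideal_hom: "f \<in> I X Y \<Longrightarrow> f \<in> Hom C X Y"
  using ideal X Y unfolding cat_ideal_def by blast

lemma Zero_mem_ideal: "Zero C X Y \<in> I X Y"
  using ideal X Y unfolding cat_ideal_def by blast

lemma Add_mem_ideal: "\<lbrakk>f \<in> I X Y; g \<in> I X Y\<rbrakk> \<Longrightarrow> Add C X Y f g \<in> I X Y"
  using ideal X Y unfolding cat_ideal_def by blast

lemma Neg_mem_ideal: "f \<in> I X Y \<Longrightarrow> Neg C X Y f \<in> I X Y"
  using ideal X Y unfolding cat_ideal_def Neg_def by blast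

lemma coset_Add_ideal:
  assumes f: "f \<in> Hom C X Y" and k: "k \<in> I X Y"
  shows "coset C I X Y (Add C X Y f k) = coset C I X Y f"
proof
  show "coset C I X Y (Add C X Y f k) \<subseteq> coset C I X Y f"
    unfolding coset_def using f k ideal_hom Add_mem_ideal by (auto simp: Add_assoc[OF X Y])
  show "coset C I X Y f \<subseteq> coset C I X Y (Add C X Y f k)"
  proof
    fix g assume "g \<in> coset C I X Y f"
    then obtain i where i: "i \<in> I X Y" "g = Add C X Y f i" unfolding coset_def by auto
    have k_hom: "k \<in> Hom C X Y" and i_hom: "i \<in> Hom C X Y" using k i ideal_hom by auto
    have "Add C X Y (Add C X Y f k) (Add C X Y (Neg C X Y k) i)
      = Add C X Y f (Add C X Y (Add C X Y k (Neg C X Y k)) i)"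
      using f k_hom i_hom by (simp add: Add_assoc[OF X Y] Neg_hom[OF X Y] Add_hom[OF X Y])
    also have "\<dots> = g" using f k_hom i_hom i(2) by (simp add: X Y)
    finally have "Add C X Y (Add C X Y f k) (Add C X Y (Neg C X Y k) i) = g" .
    moreover have "Add C X Y (Neg C X Y k) i \<in> I X Y" using Add_mem_ideal Neg_mem_ideal i k by blast
    ultimately show "g \<in> coset C I X Y (Add C X Y f k)" unfolding coset_def by blast
  qed
qed

lemma coset_self: "f \<in> Hom C X Y \<Longrightarrow> f \<in> coset C I X Y f"
  unfolding coset_def using Zero_mem_ideal Add_Zero_right[OF X Y] by force

lemma some_coset_eq:
  assumes "f \<in> Hom C X Y"
  obtains k where "k \<in> I X Y" "(SOME g. g \<in> coset C I X Y f) = Add C X Y f k"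
proof -
  have "(SOME g. g \<in> coset C I X Y f) \<in> coset C I X Y f" using coset_self[OF assms] by (rule someI)
  then show ?thesis using that unfolding coset_def by auto
qed

lemma coset_Zero: "coset C I X Y (Zero C X Y) = I X Y"
  unfolding coset_def using ideal_hom Add_Zero_left[OF X Y] by force

lemma coset_eq_Zero_iff:
  "f \<in> Hom C X Y \<Longrightarrow> coset C I X Y f = coset C I X Y (Zero C X Y) \<longleftrightarrow> f \<in> I X Y"
  by (metis coset_Zero coset_self coset_Add_ideal Add_Zero_left Zero_hom X Y)

lemma quotient_Add_coset:
  assumes f: "f \<in> Hom C X Y" and g: "g \<in> Hom C X Y"
  shows "Add (quotient_cat C I) X Y (coset C I X Y f) (coset C I X Y g)
    = coset C I X Y (Add C X Y f g)"
proof -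
  obtain i where i: "i \<in> I X Y" "(SOME h. h \<in> coset C I X Y f) = Add C X Y f i"
    by (rule some_coset_eq[OF f])
  obtain j where j: "j \<in> I X Y" "(SOME h. h \<in> coset C I X Y g) = Add C X Y g j"
    by (rule some_coset_eq[OF g])
  have ij: "i \<in> Hom C X Y" "j \<in> Hom C X Y" using i j ideal_hom by auto
  have "Add C X Y (Add C X Y f i) (Add C X Y g j) = Add C X Y (Add C X Y f g) (Add C X Y i j)"
    using f g ij by (metis Add_assoc[OF X Y] Add_commute[OF X Y] Add_hom[OF X Y])
  then show ?thesis
    unfolding quotient_cat_def using i j f g ij
    by (simp add: coset_Add_ideal Add_hom[OF X Y] Add_mem_ideal)
qed

end

lemma Cmp_mem_ideal_left:
  "\<lbrakk>X \<in> Ob C; Y \<in> Ob C; Z \<in> Ob C; f \<in> I X Y; g \<in> Hom C Y Z\<rbrakk> \<Longrightarrow> Cmp C X Y Z g f \<in> I X Z"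
  using ideal unfolding cat_ideal_def by (metis Idm_hom Cmp_Idm_right ideal_hom)

lemma Cmp_mem_ideal_right:
  assumes "X \<in> Ob C" "Y \<in> Ob C" "Z \<in> Ob C" "f \<in> Hom C X Y" "g \<in> I Y Z"
  shows "Cmp C X Y Z g f \<in> I X Z"
proof -
  have "Cmp C X Z Z (Idm C Z) (Cmp C X Y Z g f) \<in> I X Z"
    using ideal assms unfolding cat_ideal_def by blast
  moreover have "Cmp C X Y Z g f \<in> Hom C X Z"
    using Cmp_hom[OF assms(1-4) ideal_hom[OF assms(2,3,5)]] .
  ultimately show ?thesis using assms by simp
qed

lemma quotient_Cmp_coset:
  assumes X: "X \<in> Ob C" and Y: "Y \<in> Ob C" and Z: "Z \<in> Ob C"
    and f: "f \<in> Hom C X Y" and g: "g \<in> Hom C Y Z"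
  shows "Cmp (quotient_cat C I) X Y Z (coset C I Y Z g) (coset C I X Y f)
    = coset C I X Z (Cmp C X Y Z g f)"
proof -
  obtain i where i: "i \<in> I X Y" "(SOME h. h \<in> coset C I X Y f) = Add C X Y f i"
    by (rule some_coset_eq[OF X Y f])
  obtain j where j: "j \<in> I Y Z" "(SOME h. h \<in> coset C I Y Z g) = Add C Y Z g j"
    by (rule some_coset_eq[OF Y Z g])
  have ij: "i \<in> Hom C X Y" "j \<in> Hom C Y Z" using i j ideal_hom X Y Z by auto
  define f' where "f' = Add C X Y f i"
  have f': "f' \<in> Hom C X Y" unfolding f'_def using f ij Add_hom X Y by blast
  have "Cmp C X Y Z (Add C Y Z g j) f' = Add C X Z (Cmp C X Y Z g f') (Cmp C X Y Z j f')"
    using Cmp_Add_left[OF X Y Z f' g ij(2)] .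
  also have "Cmp C X Y Z g f' = Add C X Z (Cmp C X Y Z g f) (Cmp C X Y Z g i)"
    unfolding f'_def using Cmp_Add_right[OF X Y Z f ij(1) g] .
  also have "Add C X Z (Add C X Z (Cmp C X Y Z g f) (Cmp C X Y Z g i)) (Cmp C X Y Z j f')
    = Add C X Z (Cmp C X Y Z g f) (Add C X Z (Cmp C X Y Z g i) (Cmp C X Y Z j f'))"
    using Add_assoc[OF X Z Cmp_hom[OF X Y Z f g] Cmp_hom[OF X Y Z ij(1) g] Cmp_hom[OF X Y Z f' ij(2)]] .
  finally have "Cmp C X Y Z (Add C Y Z g j) f'
    = Add C X Z (Cmp C X Y Z g f) (Add C X Z (Cmp C X Y Z g i) (Cmp C X Y Z j f'))" .
  moreover have "Add C X Z (Cmp C X Y Z g i) (Cmp C X Y Z j f') \<in> I X Z"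
    using Add_mem_ideal[OF X Z] Cmp_mem_ideal_left[OF X Y Z i(1) g]
      Cmp_mem_ideal_right[OF X Y Z f' j(1)] by blast
  ultimately show ?thesis
    unfolding quotient_cat_def using i j f g
    by (simp add: f'_def[symmetric] coset_Add_ideal[OF X Z] Cmp_hom[OF X Y Z])
qed

lemma quotient_Hom: "Hom (quotient_cat C I) X Y = coset C I X Y ` Hom C X Y"
  by (simp add: quotient_cat_def)

lemma coset_surj_ring_hom:
  assumes Y: "Y \<in> Ob C"
  shows "surj_ring_hom (End_ring C Y) (End_ring (quotient_cat C I) Y) (coset C I Y Y)"
proof -
  interpret R: ring "End_ring C Y" by (rule End_ring_is_ring[OF Y])
  have hom: "coset C I Y Y \<in> ring_hom (End_ring C Y) (End_ring (quotient_cat C I) Y)"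
    by (rule ring_hom_memI)
      (simp_all add: Y End_ring_def quotient_Hom Cmp_hom quotient_Add_coset quotient_Cmp_coset,
       simp add: quotient_cat_def)
  have "ring (End_ring (quotient_cat C I) Y)"
    using R.ring_hom_imp_img_ring[OF hom] by (simp add: End_ring_def quotient_cat_def)
  moreover have "coset C I Y Y ` carrier (End_ring C Y) = carrier (End_ring (quotient_cat C I) Y)"
    by (simp add: End_ring_def quotient_Hom)
  ultimately show ?thesis
    by (intro surj_ring_hom.intro ring_hom_ringI2 R.ring_axioms hom surj_ring_hom_axioms.intro)
qed

lemma a_kernel_coset:
  assumes Y: "Y \<in> Ob C"
  shows "a_kernel (End_ring C Y) (End_ring (quotient_cat C I) Y) (coset C I Y Y) = I Y Y"
  using coset_eq_Zero_iff[OF Y Y] ideal_hom[OF Y Y]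
  by (auto simp: a_kernel_def' End_ring_def quotient_cat_def)

end

section \<open>Finite direct sum decompositions\<close>

lemma is_direct_sum_universal:
  assumes "is_direct_sum C Y D" "Z \<in> Ob C" "\<forall>(A, i)\<in>D. h (A, i) \<in> Hom C A Z"
  shows "\<exists>!g. g \<in> Hom C Y Z \<and> (\<forall>(A, i)\<in>D. Cmp C A Y Z g i = h (A, i))"
  using assms unfolding is_direct_sum_def by blast

locale direct_sum_decomposition = linear_category C for C :: "('o, 'm, 'k::field) lincat" +
  fixes Y :: 'o and D :: "('o \<times> 'm) set" and p :: "'o \<times> 'm \<Rightarrow> 'm"
  assumes direct_sum: "is_direct_sum C Y D"
    and proj_hom: "d \<in> D \<Longrightarrow> p d \<in> Hom C Y (fst d)"
    and proj_inj: "\<lbrakk>d \<in> D; d' \<in> D\<rbrakk> \<Longrightarrow> Cmp C (fst d') Y (fst d) (p d) (snd d')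
      = (if d' = d then Idm C (fst d) else Zero C (fst d') (fst d))"
begin

lemma sum_ob: "Y \<in> Ob C"
  using direct_sum unfolding is_direct_sum_def by blast

lemma summand_ob: "d \<in> D \<Longrightarrow> fst d \<in> Ob C"
  using direct_sum unfolding is_direct_sum_def by auto

lemma inj_hom: "d \<in> D \<Longrightarrow> snd d \<in> Hom C (fst d) Y"
  using direct_sum unfolding is_direct_sum_def by auto

lemma hom_eqI:
  assumes Z: "Z \<in> Ob C" and g: "g \<in> Hom C Y Z" and g': "g' \<in> Hom C Y Z"
    and eq: "\<And>d. d \<in> D \<Longrightarrow> Cmp C (fst d) Y Z g (snd d) = Cmp C (fst d) Y Z g' (snd d)"
  shows "g = g'"
proof -
  let ?h = "\<lambda>(A, i). Cmp C A Y Z g i"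
  have "\<forall>(A, i)\<in>D. ?h (A, i) \<in> Hom C A Z"
    using Z g sum_ob summand_ob inj_hom by fastforce
  then have "\<exists>!h. h \<in> Hom C Y Z \<and> (\<forall>(A, i)\<in>D. Cmp C A Y Z h i = ?h (A, i))"
    by (rule is_direct_sum_universal[OF direct_sum Z])
  moreover have "\<forall>(A, i)\<in>D. Cmp C A Y Z g i = ?h (A, i)" "\<forall>(A, i)\<in>D. Cmp C A Y Z g' i = ?h (A, i)"
    using eq by auto
  ultimately show ?thesis using g g' by blast
qed

definition idem :: "'o \<times> 'm \<Rightarrow> 'm" where
  "idem d = Cmp C Y (fst d) Y (snd d) (p d)"

lemma idem_hom: "d \<in> D \<Longrightarrow> idem d \<in> Hom C Y Y"
  unfolding idem_def using sum_ob summand_ob inj_hom proj_hom by blast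

lemma idem_inj:
  assumes d: "d \<in> D" and d': "d' \<in> D"
  shows "Cmp C (fst d') Y Y (idem d) (snd d') = (if d' = d then snd d else Zero C (fst d') Y)"
proof -
  have "Cmp C (fst d') Y Y (idem d) (snd d')
    = Cmp C (fst d') (fst d) Y (snd d) (Cmp C (fst d') Y (fst d) (p d) (snd d'))"
    unfolding idem_def
    using Cmp_assoc[OF summand_ob[OF d'] sum_ob summand_ob[OF d] sum_ob inj_hom[OF d'] proj_hom[OF d] inj_hom[OF d]]
    by simp
  then show ?thesis
    using proj_inj[OF d d'] summand_ob[OF d] summand_ob[OF d'] inj_hom[OF d] sum_ob by auto
qed

lemma idem_idem:
  assumes d: "d \<in> D" and d': "d' \<in> D"
  shows "Cmp C Y Y Y (idem d) (idem d') = (if d = d' then idem d else Zero C Y Y)"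
proof -
  have "Cmp C Y Y Y (idem d) (idem d') = Cmp C Y (fst d') Y (Cmp C (fst d') Y Y (idem d) (snd d')) (p d')"
    unfolding idem_def[of d']
    using Cmp_assoc[OF sum_ob summand_ob[OF d'] sum_ob sum_ob proj_hom[OF d'] inj_hom[OF d'] idem_hom[OF d]]
    by simp
  then show ?thesis
    using idem_inj[OF d d'] summand_ob[OF d'] proj_hom[OF d'] sum_ob by (auto simp: idem_def)
qed

lemma finsum_idem:
  assumes fin: "finite D"
  shows "finsum (End_ring C Y) idem D = Idm C Y"
proof -
  interpret R: ring "End_ring C Y" by (rule End_ring_is_ring[OF sum_ob])
  define s where "s = finsum (End_ring C Y) idem D"
  have idem_Pi: "idem \<in> D \<rightarrow> carrier (End_ring C Y)" using idem_hom by auto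
  have s: "s \<in> Hom C Y Y" unfolding s_def using R.finsum_closed[OF idem_Pi] by simp
  have "Cmp C (fst d) Y Y s (snd d) = snd d" if d: "d \<in> D" for d
  proof -
    have "s \<otimes>\<^bsub>End_ring C Y\<^esub> idem d = (\<Oplus>\<^bsub>End_ring C Y\<^esub>d'\<in>D. idem d' \<otimes>\<^bsub>End_ring C Y\<^esub> idem d)"
      unfolding s_def using R.finsum_ldistr[OF fin _ idem_Pi] idem_hom[OF d] by simp
    also have "\<dots> = (\<Oplus>\<^bsub>End_ring C Y\<^esub>d'\<in>D. if d = d' then idem d' else \<zero>\<^bsub>End_ring C Y\<^esub>)"
      by (intro R.add.finprod_cong') (auto simp: idem_idem d idem_hom sum_ob)
    also have "\<dots> = idem d" by (rule R.finsum_singleton[OF d fin idem_Pi])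
    finally have s_idem: "Cmp C Y Y Y s (idem d) = idem d" by simp
    have "Cmp C (fst d) Y Y s (snd d) = Cmp C (fst d) Y Y s (Cmp C (fst d) Y Y (idem d) (snd d))"
      using idem_inj[OF d d] by simp
    also have "\<dots> = Cmp C (fst d) Y Y (Cmp C Y Y Y s (idem d)) (snd d)"
      using Cmp_assoc[OF summand_ob[OF d] sum_ob sum_ob sum_ob inj_hom[OF d] idem_hom[OF d] s] .
    also have "\<dots> = snd d" using s_idem idem_inj[OF d d] by simp
    finally show ?thesis .
  qed
  then show ?thesis
    unfolding s_def[symmetric]
    by (intro hom_eqI[OF sum_ob s Idm_hom[OF sum_ob]]) (simp add: summand_ob inj_hom sum_ob)
qed

text \<open>The corner \<open>e End(Y) e\<close> of \<open>e = i p\<close> is \<open>End(A)\<close> via \<open>s \<mapsto> i s p\<close>; under this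
  identification \<open>e - w e\<close> corresponds to \<open>1 - p w i\<close>, so a left inverse of the latter lifts.\<close>
lemma idem_corner_left_inverse:
  assumes Ai: "(A, i) \<in> D" and w: "w \<in> Hom C Y Y" and t: "t \<in> Hom C A A"
    and t_inv: "Cmp C A A A t (Add C A A (Idm C A) (Neg C A A (Cmp C A Y A (Cmp C Y Y A (p (A, i)) w) i)))
      = Idm C A"
  shows "Cmp C Y Y Y (Cmp C Y A Y i (Cmp C Y A A t (p (A, i))))
      (Add C Y Y (idem (A, i)) (Neg C Y Y (Cmp C Y Y Y w (idem (A, i))))) = idem (A, i)"
proof -
  define q c u where "q = p (A, i)" and "c = Cmp C A Y A (Cmp C Y Y A q w) i"
    and "u = Add C A A (Idm C A) (Neg C A A c)"
  have Y: "Y \<in> Ob C" and A: "A \<in> Ob C" and i: "i \<in> Hom C A Y" and q: "q \<in> Hom C Y A"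
    using sum_ob summand_ob[OF Ai] inj_hom[OF Ai] proj_hom[OF Ai] by (auto simp: q_def)
  have e: "idem (A, i) = Cmp C Y A Y i q" by (simp add: idem_def q_def)
  have c: "c \<in> Hom C A A" unfolding c_def using Y A i q w by blast
  have we: "Cmp C Y Y Y w (idem (A, i)) \<in> Hom C Y Y" using idem_hom[OF Ai] Y w by blast
  have qe: "Cmp C Y Y A q (idem (A, i)) = q"
    using Cmp_assoc[OF Y A Y A q i q] proj_inj[OF Ai Ai] A Y q by (simp add: e q_def)
  have q_we: "Cmp C Y Y A q (Cmp C Y Y Y w (idem (A, i))) = Cmp C Y A A c q"
    unfolding c_def e using Y A i q w by (simp add: Cmp_assoc Cmp_hom)
  define y where "y = Add C Y Y (idem (A, i)) (Neg C Y Y (Cmp C Y Y Y w (idem (A, i))))"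
  have y: "y \<in> Hom C Y Y" unfolding y_def using Y idem_hom[OF Ai] we by blast
  have "Cmp C Y Y A q y = Add C Y A q (Neg C Y A (Cmp C Y A A c q))"
    unfolding y_def using Y A q idem_hom[OF Ai] we
    by (simp add: Cmp_Add_right Cmp_Neg_right Neg_hom qe q_we)
  also have "\<dots> = Cmp C Y A A u q"
    unfolding u_def using Y A q c by (simp add: Cmp_Add_left Cmp_Neg_left Neg_hom)
  finally have qy: "Cmp C Y Y A q y = Cmp C Y A A u q" .
  have tq: "Cmp C Y A A t q \<in> Hom C Y A" using Y A t q by blast
  have "Cmp C Y Y Y (Cmp C Y A Y i (Cmp C Y A A t q)) y = Cmp C Y A Y i (Cmp C Y Y A (Cmp C Y A A t q) y)"
    using Cmp_assoc[OF Y Y A Y y tq i] by simp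
  also have "Cmp C Y Y A (Cmp C Y A A t q) y = Cmp C Y A A t (Cmp C Y A A u q)"
    using Cmp_assoc[OF Y Y A A y q t] qy by simp
  also have "\<dots> = q"
    using Cmp_assoc[OF Y A A A q _ t] t_inv Y A q c by (simp add: u_def c_def q_def Add_hom Neg_hom)
  finally show ?thesis by (simp add: e y_def q_def)
qed

text \<open>The left ideals of maps killing the first \<open>n\<close> summands of an infinite family would form a
  strictly descending chain.\<close>
lemma finite_summands:
  assumes art: "left_artinian (End_ring C Y)"
    and nonzero: "\<And>d. d \<in> D \<Longrightarrow> Idm C (fst d) \<noteq> Zero C (fst d) (fst d)"
  shows "finite D"
proof (rule ccontr)
  assume "infinite D"
  then obtain f :: "nat \<Rightarrow> _" where f: "inj f" "range f \<subseteq> D"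
    using infinite_countable_subset by blast
  interpret R: ring "End_ring C Y" by (rule End_ring_is_ring[OF sum_ob])
  have fD: "\<And>n. f n \<in> D" using f by auto
  note ob = summand_ob[OF fD] sum_ob and inj = inj_hom[OF fD]
  define L where "L n = {r \<in> Hom C Y Y. \<forall>k<n. Cmp C (fst (f k)) Y Y r (snd (f k)) = Zero C (fst (f k)) Y}" for n
  have "left_ideal (End_ring C Y) (L n) \<and> L (Suc n) \<subset> L n" for n
  proof
    show "left_ideal (End_ring C Y) (L n)"
    proof (rule R.left_idealI)
      fix a assume a: "a \<in> L n"
      then have a_hom: "a \<in> Hom C Y Y" unfolding L_def by auto
      have "Cmp C (fst (f k)) Y Y (Neg C Y Y a) (snd (f k)) = Zero C (fst (f k)) Y" if "k < n" for k
        using a that ob inj by (simp add: L_def Cmp_Neg_left)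
      then show "\<ominus>\<^bsub>End_ring C Y\<^esub> a \<in> L n"
        unfolding L_def using End_ring_a_inv[OF sum_ob a_hom] Neg_hom[OF sum_ob sum_ob a_hom] by simp
    qed (use ob inj in \<open>auto simp: L_def Cmp_Add_left Add_hom Cmp_assoc[symmetric]\<close>)
    have "idem (f n) \<in> L n" unfolding L_def using idem_hom[OF fD] idem_inj[OF fD fD] f(1)
      by (auto dest: injD)
    moreover have "idem (f n) \<notin> L (Suc n)"
    proof
      assume "idem (f n) \<in> L (Suc n)"
      then have "snd (f n) = Zero C (fst (f n)) Y" unfolding L_def using idem_inj[OF fD fD] by auto
      then have "Cmp C (fst (f n)) Y (fst (f n)) (p (f n)) (snd (f n)) = Zero C (fst (f n)) (fst (f n))"
        using ob proj_hom[OF fD] by simp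
      then show False using proj_inj[OF fD fD] nonzero[OF fD] by simp
    qed
    moreover have "L (Suc n) \<subseteq> L n" unfolding L_def by auto
    ultimately show "L (Suc n) \<subset> L n" by blast
  qed
  then show False using art unfolding left_artinian_def by blast
qed

end

lemma (in linear_category) direct_sum_decomposition_exists:
  assumes ds: "is_direct_sum C Y D"
  shows "\<exists>p. direct_sum_decomposition C Y D p"
proof -
  have D: "\<And>A i. (A, i) \<in> D \<Longrightarrow> A \<in> Ob C"
    using ds unfolding is_direct_sum_def by auto
  have "\<exists>g. g \<in> Hom C Y (fst d) \<and> (\<forall>d'\<in>D. Cmp C (fst d') Y (fst d) g (snd d')
          = (if d' = d then Idm C (fst d) else Zero C (fst d') (fst d)))" if d: "d \<in> D" for d
  proof -
    let ?h = "\<lambda>d'. if d' = d then Idm C (fst d) else Zero C (fst d') (fst d)"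
    have d_ob: "fst d \<in> Ob C" using D d by (cases d) auto
    have "\<forall>(A, i)\<in>D. ?h (A, i) \<in> Hom C A (fst d)"
      using D d_ob by auto
    then obtain g where g: "g \<in> Hom C Y (fst d)" "\<forall>(A, i)\<in>D. Cmp C A Y (fst d) g i = ?h (A, i)"
      using is_direct_sum_universal[OF ds d_ob, of ?h] by blast
    have "\<forall>d'\<in>D. Cmp C (fst d') Y (fst d) g (snd d') = ?h d'"
    proof
      fix d' assume "d' \<in> D"
      then show "Cmp C (fst d') Y (fst d) g (snd d') = ?h d'" using g(2) by (cases d') auto
    qed
    then show ?thesis using g(1) by blast
  qed
  then have "\<forall>d\<in>D. \<exists>g. g \<in> Hom C Y (fst d) \<and> (\<forall>d'\<in>D. Cmp C (fst d') Y (fst d) g (snd d')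
          = (if d' = d then Idm C (fst d) else Zero C (fst d') (fst d)))" by blast
  from bchoice[OF this] obtain p where p: "\<forall>d\<in>D. p d \<in> Hom C Y (fst d) \<and>
      (\<forall>d'\<in>D. Cmp C (fst d') Y (fst d) (p d) (snd d')
          = (if d' = d then Idm C (fst d) else Zero C (fst d') (fst d)))" by blast
  have "direct_sum_decomposition C Y D p"
    by (intro direct_sum_decomposition.intro direct_sum_decomposition_axioms.intro
        linear_category_axioms ds) (use p in auto)
  then show ?thesis by blast
qed

section \<open>Admissible ideals lie in the radical\<close>

context linear_category_ideal
begin

lemma ideal_nonunit:
  assumes A: "A \<in> Ob C" and no_Idm: "Idm C A \<notin> I A A" and c: "c \<in> I A A"
  shows "c \<notin> Units (End_ring C A)"
proof
  assume "c \<in> Units (End_ring C A)"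
  then obtain v where v: "v \<in> Hom C A A" "Cmp C A A A v c = Idm C A"
    unfolding Units_def by auto
  then show False using Cmp_mem_ideal_left[OF A A A c v(1)] no_Idm by simp
qed

lemma one_minus_ideal_left_invertible:
  assumes A: "A \<in> Ob C" and local: "local_ring (End_ring C A)" and no_Idm: "Idm C A \<notin> I A A"
    and c: "c \<in> I A A"
  obtains t where "t \<in> Hom C A A" "Cmp C A A A t (Add C A A (Idm C A) (Neg C A A c)) = Idm C A"
proof -
  have c_hom: "c \<in> Hom C A A" by (rule ideal_hom[OF A A c])
  have "\<one>\<^bsub>End_ring C A\<^esub> \<ominus>\<^bsub>End_ring C A\<^esub> c \<in> Units (End_ring C A)"
    using ring.local_ring_one_minus_nonunit[OF End_ring_is_ring[OF A] local] c_hom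
      ideal_nonunit[OF A no_Idm c] by simp
  moreover have "\<one>\<^bsub>End_ring C A\<^esub> \<ominus>\<^bsub>End_ring C A\<^esub> c = Add C A A (Idm C A) (Neg C A A c)"
    by (simp add: a_minus_def End_ring_a_inv[OF A c_hom])
  ultimately show ?thesis using that unfolding Units_def by auto
qed

lemma Cmp_idem_mem_maximal_left_ideal:
  assumes dec: "direct_sum_decomposition C Y D p" and d: "d \<in> D"
    and local: "local_ring (End_ring C (fst d))" and no_Idm: "Idm C (fst d) \<notin> I (fst d) (fst d)"
    and z: "z \<in> I Y Y" and L: "maximal_left_ideal (End_ring C Y) L"
  shows "Cmp C Y Y Y z (direct_sum_decomposition.idem C Y p d) \<in> L"
proof -
  interpret direct_sum_decomposition C Y D p by (rule dec)
  interpret R: ring "End_ring C Y" by (rule End_ring_is_ring[OF sum_ob])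
  obtain A i where d_eq: "d = (A, i)" by (cases d)
  define e x where "e = idem d" and "x = Cmp C Y Y Y z e"
  have Y: "Y \<in> Ob C" and A: "A \<in> Ob C" and i: "i \<in> Hom C A Y" and q: "p d \<in> Hom C Y A"
    and e: "e \<in> Hom C Y Y" and z_hom: "z \<in> Hom C Y Y"
    using sum_ob summand_ob[OF d] inj_hom[OF d] proj_hom[OF d] idem_hom[OF d] ideal_hom[OF _ _ z]
    by (auto simp: d_eq e_def)
  have x: "x \<in> Hom C Y Y" unfolding x_def using Y z_hom e by blast
  show ?thesis unfolding e_def[symmetric] x_def[symmetric]
  proof (rule R.mem_maximal_left_ideal_if_corner_invertible[OF L])
    show "x \<otimes>\<^bsub>End_ring C Y\<^esub> e = x"
      using Cmp_assoc[OF Y Y Y Y e e z_hom] idem_idem[OF d d] by (simp add: x_def e_def)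
    fix a assume "a \<in> carrier (End_ring C Y)"
    then have a: "a \<in> Hom C Y Y" by simp
    define w where "w = Cmp C Y Y Y a z"
    have w_ideal: "w \<in> I Y Y" unfolding w_def by (rule Cmp_mem_ideal_left[OF Y Y Y z a])
    have w: "w \<in> Hom C Y Y" by (rule ideal_hom[OF Y Y w_ideal])
    have "Cmp C A Y A (Cmp C Y Y A (p d) w) i \<in> I A A"
      using Cmp_mem_ideal_right[OF A Y A i Cmp_mem_ideal_left[OF Y Y A w_ideal q]] .
    then obtain t where t: "t \<in> Hom C A A"
      "Cmp C A A A t (Add C A A (Idm C A) (Neg C A A (Cmp C A Y A (Cmp C Y Y A (p d) w) i))) = Idm C A"
      using one_minus_ideal_left_invertible[OF A] local no_Idm unfolding d_eq fst_conv by blast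
    have "Cmp C Y Y Y (Cmp C Y A Y i (Cmp C Y A A t (p d))) (Add C Y Y e (Neg C Y Y (Cmp C Y Y Y w e))) = e"
      using idem_corner_left_inverse[OF d[unfolded d_eq] w t[unfolded d_eq]]
      unfolding e_def d_eq .
    moreover have "e \<ominus>\<^bsub>End_ring C Y\<^esub> a \<otimes>\<^bsub>End_ring C Y\<^esub> x = Add C Y Y e (Neg C Y Y (Cmp C Y Y Y w e))"
      using Cmp_assoc[OF Y Y Y Y e z_hom a] End_ring_a_inv[OF Y Cmp_hom[OF Y Y Y e w]]
      by (simp add: a_minus_def x_def w_def)
    moreover have "Cmp C Y A Y i (Cmp C Y A A t (p d)) \<in> Hom C Y Y"
      using Cmp_hom[OF Y A Y _ i] Cmp_hom[OF Y A A q t(1)] .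
    ultimately show "\<exists>t\<in>carrier (End_ring C Y). t \<otimes>\<^bsub>End_ring C Y\<^esub> (e \<ominus>\<^bsub>End_ring C Y\<^esub> a \<otimes>\<^bsub>End_ring C Y\<^esub> x) = e"
      by auto
  qed (use e x in simp_all)
qed

lemma ideal_End_subset_jacobson:
  assumes dec: "direct_sum_decomposition C Y D p" and fin: "finite D"
    and local: "\<And>d. d \<in> D \<Longrightarrow> local_ring (End_ring C (fst d))"
    and no_Idm: "\<And>d. d \<in> D \<Longrightarrow> Idm C (fst d) \<notin> I (fst d) (fst d)"
  shows "I Y Y \<subseteq> jacobson (End_ring C Y)"
proof
  interpret direct_sum_decomposition C Y D p by (rule dec)
  interpret R: ring "End_ring C Y" by (rule End_ring_is_ring[OF sum_ob])
  fix z assume z: "z \<in> I Y Y"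
  then have z_hom: "z \<in> Hom C Y Y" using ideal_hom[OF sum_ob sum_ob] by blast
  have idem_Pi: "idem \<in> D \<rightarrow> carrier (End_ring C Y)" using idem_hom by auto
  have "z \<in> L" if L: "maximal_left_ideal (End_ring C Y) L" for L
  proof -
    have L_ideal: "left_ideal (End_ring C Y) L" using L unfolding maximal_left_ideal_def by blast
    have "z = z \<otimes>\<^bsub>End_ring C Y\<^esub> finsum (End_ring C Y) idem D"
      using finsum_idem[OF fin] z_hom sum_ob by simp
    also have "\<dots> = (\<Oplus>\<^bsub>End_ring C Y\<^esub>d\<in>D. z \<otimes>\<^bsub>End_ring C Y\<^esub> idem d)"
      using R.finsum_rdistr[OF fin _ idem_Pi] z_hom by simp
    also have "\<dots> \<in> L"
      using R.left_ideal_finsum[OF L_ideal fin]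
        Cmp_idem_mem_maximal_left_ideal[OF dec _ local no_Idm z L] by simp
    finally show ?thesis .
  qed
  then show "z \<in> jacobson (End_ring C Y)" unfolding jacobson_def using z_hom by simp
qed

lemma Idm_notin_admissible_ideal:
  assumes adm: "admissible C I" and A: "A \<in> Ob C"
  shows "Idm C A \<notin> I A A"
proof
  assume Idm_mem: "Idm C A \<in> I A A"
  then obtain n Xs gs where n: "n \<ge> 1" "Xs 0 = A" "\<forall>i\<le>n. Xs i \<in> Ob C"
      "\<forall>i<n. gs i \<in> Hom C (Xs i) (Xs (Suc i)) \<and> gs i \<notin> I (Xs i) (Xs (Suc i))"
    using adm A unfolding admissible_def by blast
  have g: "gs 0 \<in> Hom C A (Xs 1)" "gs 0 \<notin> I A (Xs 1)" and X1: "Xs 1 \<in> Ob C" using n by auto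
  then show False using Cmp_mem_ideal_left[OF A A X1 Idm_mem g(1)] A by simp
qed

lemma ideal_subset_jacobson:
  assumes krsa: "KRSA C" and art: "\<forall>X\<in>Ob C. artinian (End_ring C X)"
    and no_Idm: "\<And>A. A \<in> Ob C \<Longrightarrow> Idm C A \<notin> I A A" and Y: "Y \<in> Ob C"
  shows "I Y Y \<subseteq> jacobson (End_ring C Y)"
proof -
  obtain D where ds: "is_direct_sum C Y D" and local: "\<forall>(A, i)\<in>D. local_ring (End_ring C A)"
    using krsa Y unfolding KRSA_def by blast
  then have local': "\<And>d. d \<in> D \<Longrightarrow> local_ring (End_ring C (fst d))" by auto
  obtain p where dec: "direct_sum_decomposition C Y D p"
    using direct_sum_decomposition_exists[OF ds] by blast
  have summand_ob: "\<And>d. d \<in> D \<Longrightarrow> fst d \<in> Ob C"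
    by (rule direct_sum_decomposition.summand_ob[OF dec])
  have "finite D"
  proof (rule direct_sum_decomposition.finite_summands[OF dec])
    show "left_artinian (End_ring C Y)" using art Y unfolding artinian_def by blast
    show "Idm C (fst d) \<noteq> Zero C (fst d) (fst d)" if "d \<in> D" for d
      using local'[OF that] unfolding local_ring_def by simp
  qed
  then show ?thesis
    using ideal_End_subset_jacobson[OF dec _ local'] no_Idm summand_ob by blast
qed

lemma coset_mem_Rad_quotient_iff:
  assumes J: "\<And>Y. Y \<in> Ob C \<Longrightarrow> I Y Y \<subseteq> jacobson (End_ring C Y)"
    and X: "X \<in> Ob C" and Y: "Y \<in> Ob C" and f: "f \<in> Hom C X Y"
  shows "coset C I X Y f \<in> Rad (quotient_cat C I) X Y \<longleftrightarrow> f \<in> Rad C X Y"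
proof -
  interpret H: surj_ring_hom "End_ring C Y" "End_ring (quotient_cat C I) Y" "coset C I Y Y"
    by (rule coset_surj_ring_hom[OF Y])
  have jacobson_iff: "coset C I Y Y h \<in> jacobson (End_ring (quotient_cat C I) Y)
      \<longleftrightarrow> h \<in> jacobson (End_ring C Y)" if "h \<in> Hom C Y Y" for h
    using H.mem_jacobson_iff_image a_kernel_coset[OF Y] J[OF Y] that by simp
  have "coset C I X Y f \<in> Rad (quotient_cat C I) X Y \<longleftrightarrow>
      (\<forall>g\<in>Hom C Y X. coset C I Y Y (Cmp C Y X Y f g) \<in> jacobson (End_ring (quotient_cat C I) Y))"
    unfolding Rad_def quotient_Hom using f by (auto simp: quotient_Cmp_coset[OF Y X Y])
  also have "\<dots> \<longleftrightarrow> (\<forall>g\<in>Hom C Y X. Cmp C Y X Y f g \<in> jacobson (End_ring C Y))"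
    using jacobson_iff Cmp_hom[OF Y X Y _ f] by auto
  also have "\<dots> \<longleftrightarrow> f \<in> Rad C X Y"
    unfolding Rad_def using f by simp
  finally show ?thesis .
qed

lemma Rad_quotient_cat:
  assumes J: "\<And>Y. Y \<in> Ob C \<Longrightarrow> I Y Y \<subseteq> jacobson (End_ring C Y)"
    and X: "X \<in> Ob C" and Y: "Y \<in> Ob C"
  shows "Rad (quotient_cat C I) X Y = coset C I X Y ` Rad C X Y"
proof
  show "Rad (quotient_cat C I) X Y \<subseteq> coset C I X Y ` Rad C X Y"
  proof
    fix F assume F: "F \<in> Rad (quotient_cat C I) X Y"
    then obtain f where f: "f \<in> Hom C X Y" "F = coset C I X Y f"
      unfolding Rad_def quotient_Hom by blast
    then show "F \<in> coset C I X Y ` Rad C X Y"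
      using F coset_mem_Rad_quotient_iff[OF J X Y f(1)] by blast
  qed
  show "coset C I X Y ` Rad C X Y \<subseteq> Rad (quotient_cat C I) X Y"
    using coset_mem_Rad_quotient_iff[OF J X Y] unfolding Rad_def[of C] by blast
qed

end

theorem mainTheorem8:
  fixes C :: "('o, 'm, 'k::field_char_0) lincat"
    and I :: "'o \<Rightarrow> 'o \<Rightarrow> 'm set"
  assumes "algebraically_closed_field TYPE('k)"
    and "k_linear_category C"
    and "KRSA C"
    and "\<forall>X\<in>Ob C. artinian (End_ring C X)"
    and "admissible C I"
  shows "\<forall>X\<in>Ob C. \<forall>Y\<in>Ob C.
           Rad (quotient_cat C I) X Y = coset C I X Y ` Rad C X Y"
proof -
  interpret linear_category_ideal C I
    using assms(2,5) unfolding admissible_def by unfold_locales auto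
  have "I Y Y \<subseteq> jacobson (End_ring C Y)" if "Y \<in> Ob C" for Y
    using ideal_subset_jacobson[OF assms(3,4) Idm_notin_admissible_ideal[OF assms(5)] that] .
  then show ?thesis using Rad_quotient_cat by blast
qed

end
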